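(* Let $R\ge 0$ and $0\le m<2^R$ with $n=2^R+m>3$. Let $\mu$ be a partition of $m$ and $\lambda$ a $2^R$-parent of $\mu$, with affected hook-length $h=h^\lambda_\mu$. Then \[ \mathrm{Od}(f^\lambda)=(-1)^{s_2(n)+s_2(h)+\eta^\lambda_\mu}\,\mathrm{Od}(f^\mu). \]
   Context: $f^\lambda$ is the number of standard Young tableaux of shape $\lambda$. For $N\ge1$, $N=2^vo$ with $o$ odd, $\mathrm{Od}(N)=1$ if $o\equiv1\pmod4$ and $-1$ if $o\equiv3\pmod4$. For a partition $\lambda=(\lambda_1\ge\dots\ge\lambda_k>0)$, $H(\lambda):=\{\lambda_i+k-i:1\le i\le k\}$ (first-column hook lengths), $H(\varnothing)=\varnothing$. For a finite $X\subset\mathbb{Z}_{\ge0}$ and $r\ge0$, $X^{+r}:=\{x+r:x\in X\}\cup\{0,1,\dots,r-1\}$. A partition $\lambda$ of $2^R+m$ is a $2^R$-parent of the partition $\mu$ of $m$ ($m<2^R$) if $\mu$ is the $2^R$-core of $\lambda$, i.e. $\mu$ is obtained from $\lambda$ by removing a rim hook of length $2^R$; equivalently, there is an $h\in H(\lambda)$ with $h\ge 2^R$, $h-2^R\notin H(\lambda)$ and $(H(\lambda)\cup\{h-2^R\})\setminus\{h\}=H(\mu)^{+r}$ for some $r\ge0$. This $h$ is unique and is called the affected hook-length $h^\lambda_\mu$. For $N$ with binary expansion $b_k\dots b_0$ ($b_k=1$, $k\ge1$), $s_2(N):=b_k+b_{k-1}$. Finally $\eta^\lambda_\mu\in\mathbb{Z}/2\mathbb{Z}$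 is defined by $(-1)^{\eta^\lambda_\mu}=\prod_{x\in H(\lambda),\,x\ne h}\frac{\mathrm{Od}(|h-x|)}{\mathrm{Od}(|h-2^R-x|)}$ with $h=h^\lambda_\mu$. *)

theory Defs
  imports Complex_Main "HOL-Computational_Algebra.Primes"
begin

definition is_partition :: "nat list \<Rightarrow> bool" where
  "is_partition lam \<longleftrightarrow> sorted_wrt (\<ge>) lam \<and> (\<forall>x\<in>set lam. x > 0)"

definition partition_of :: "nat list \<Rightarrow> nat \<Rightarrow> bool" where
  "partition_of lam n \<longleftrightarrow> is_partition lam \<and> sum_list lam = n"

(* cells of the Young diagram, 0-indexed (row, column) *)
definition cells :: "nat list \<Rightarrow> (nat \<times> nat) set" where
  "cells lam = {(i, j). i < length lam \<and> j < lam ! i}"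

definition SYT :: "nat list \<Rightarrow> ((nat \<times> nat) \<Rightarrow> nat) set" where
  "SYT lam = {T. bij_betw T (cells lam) {1..sum_list lam}
      \<and> (\<forall>c. c \<notin> cells lam \<longrightarrow> T c = 0)
      \<and> (\<forall>i j. (i, j + 1) \<in> cells lam \<longrightarrow> T (i, j) < T (i, j + 1))
      \<and> (\<forall>i j. (i + 1, j) \<in> cells lam \<longrightarrow> T (i, j) < T (i + 1, j))}"

definition num_SYT :: "nat list \<Rightarrow> nat" where
  "num_SYT lam = card (SYT lam)"

definition Od :: "nat \<Rightarrow> int" where
  "Od N = (if (N div 2 ^ multiplicity (2::nat) (N::nat)) mod 4 = 1 then 1 else -1)"

(* first-column hook lengths H(lambda) = {lambda_i + k - i : 1 <= i <= k} *)
definition H :: "nat list \<Rightarrow> nat set" where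
  "H lam = {lam ! i + length lam - (i + 1) | i. i < length lam}"

definition shiftset :: "nat set \<Rightarrow> nat \<Rightarrow> nat set" where
  "shiftset X r = (\<lambda>x. x + r) ` X \<union> {0..<r}"

definition affected_hook :: "nat \<Rightarrow> nat list \<Rightarrow> nat list \<Rightarrow> nat \<Rightarrow> bool" where
  "affected_hook R lam mu h \<longleftrightarrow> h \<in> H lam \<and> h \<ge> 2 ^ R \<and> h - 2 ^ R \<notin> H lam
     \<and> (\<exists>r. (H lam \<union> {h - 2 ^ R}) - {h} = shiftset (H mu) r)"

definition is_parent :: "nat \<Rightarrow> nat list \<Rightarrow> nat list \<Rightarrow> bool" where
  "is_parent R lam mu \<longleftrightarrow> sum_list mu < 2 ^ R \<and> partition_of mu (sum_list mu)
     \<and> partition_of lam (2 ^ R + sum_list mu) \<and> (\<exists>h. affected_hook R lam mu h)"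

(* s_2(N) = b_k + b_{k-1}, where b_k is the leading binary digit of N (N >= 2) *)
definition s2 :: "nat \<Rightarrow> nat" where
  "s2 N = (let k = (GREATEST k. 2 ^ k \<le> N) in
           (N div 2 ^ k) mod 2 + (N div 2 ^ (k - 1)) mod 2)"

definition eta_sign :: "nat \<Rightarrow> nat list \<Rightarrow> nat \<Rightarrow> real" where
  "eta_sign R lam h = (\<Prod>x\<in>H lam - {h}.
      of_int (Od (nat \<bar>int h - int x\<bar>)) / of_int (Od (nat \<bar>int h - 2 ^ R - int x\<bar>)))"

end

theory Submission
  imports Defs
begin

(*
  The hook length formula in first-column form,
    f^lam * prod_{x in H(lam)} x!  =  n! * prod_{y < x in H(lam)} (x - y),
  also holds for shapes padded by zero rows, and padding mu by r zero rows turns H(mu) into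
  H(mu)^{+r}. Hence H(lam) and the padded H(mu) share A = H(lam) - {h} and differ only in h
  versus h - 2^R, and dividing the two hook formulas expresses f^lam / f^mu through n!/m!,
  h!/(h - 2^R)! and the products of |h - y| and |h - 2^R - y| over y in A. Now Od is
  multiplicative, the last two products give eta, and Od(N!) Od((N - 2^R)!) is Od of a product
  of 2^R consecutive integers: its odd factors contribute 1 (their residues mod 4 balance out
  once R >= 3) and its even factors halve to 2^(R-1) consecutive integers, so induction on R
  yields (-1)^s2(N).

  The hook length formula itself is proved by induction through the branching rule (the largest
  entry sits in a corner). Removing a corner lowers one element x of the beta-set X by one, which
  multiplies the right-hand side by x * prod_{y in X, y ~= x} (x - 1 - y)/(x - y); a partial
  fraction expansion shows that these factors sum to sum X - |X|(|X| - 1)/2 = n.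
*)

section \<open>Partial fractions and the Vandermonde product\<close>

definition shift_factor :: "nat set \<Rightarrow> nat \<Rightarrow> real" where
  "shift_factor X x = (\<Prod>y\<in>X - {x}. (real x - 1 - real y) / (real x - real y))"

lemma shift_factor_insert:
  assumes "finite X" "a \<notin> X" "x \<in> X"
  shows "shift_factor (insert a X) x = shift_factor X x * ((real x - 1 - real a) / (real x - real a))"
proof -
  have "insert a X - {x} = insert a (X - {x})" using assms by auto
  then show ?thesis
    unfolding shift_factor_def using assms by (simp add: mult.commute)
qed

lemma shift_factor_insert_eq_prod:
  "a \<notin> X \<Longrightarrow> shift_factor (insert a X) a = (\<Prod>y\<in>X. (real a - 1 - real y) / (real a - real y))"
  unfolding shift_factor_def by (simp add: insert_Diff_if)

lemma prod_shift_partial_fractions: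
  assumes "finite X" "z \<notin> real ` X"
  shows "(\<Prod>y\<in>X. (z - 1 - real y) / (z - real y)) = 1 - (\<Sum>x\<in>X. shift_factor X x / (z - real x))"
  using assms
proof (induction X arbitrary: z rule: finite_induct)
  case empty
  show ?case by simp
next
  case (insert a X)
  have za: "z - real a \<noteq> 0" and zX: "z \<notin> real ` X" using insert.prems by auto
  have self: "shift_factor (insert a X) a = 1 - (\<Sum>x\<in>X. shift_factor X x / (real a - real x))"
    using insert.IH[of "real a"] insert.hyps by (simp add: shift_factor_insert_eq_prod image_iff)
  have step: "(z - 1 - real a) / (z - real a) * (shift_factor X x / (z - real x))
      = shift_factor (insert a X) x / (z - real x)
        - shift_factor X x / (real a - real x) / (z - real a)" if x: "x \<in> X" for x
  proof -
    have "real x \<noteq> real a" "z \<noteq> real x" "z \<noteq> real a" using x insert.hyps zX za by auto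
    then show ?thesis
      unfolding shift_factor_insert[OF insert.hyps(1,2) x]
      by (simp add: divide_simps) (simp add: algebra_simps)
  qed
  have "(\<Prod>y\<in>insert a X. (z - 1 - real y) / (z - real y))
      = (z - 1 - real a) / (z - real a) * (1 - (\<Sum>x\<in>X. shift_factor X x / (z - real x)))"
    using insert.hyps insert.IH[OF zX] by simp
  also have "\<dots> = 1 - 1 / (z - real a)
      - (\<Sum>x\<in>X. (z - 1 - real a) / (z - real a) * (shift_factor X x / (z - real x)))"
  proof -
    have "(z - 1 - real a) / (z - real a) = 1 - 1 / (z - real a)" using za by (simp add: field_simps)
    then show ?thesis by (simp add: right_diff_distrib sum_distrib_left)
  qed
  also have "(\<Sum>x\<in>X. (z - 1 - real a) / (z - real a) * (shift_factor X x / (z - real x)))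
      = (\<Sum>x\<in>X. shift_factor (insert a X) x / (z - real x))
        - (\<Sum>x\<in>X. shift_factor X x / (real a - real x)) / (z - real a)"
    unfolding sum_divide_distrib sum_subtractf[symmetric] by (rule sum.cong) (auto simp only: step)
  also have "1 - 1 / (z - real a) - ((\<Sum>x\<in>X. shift_factor (insert a X) x / (z - real x))
        - (\<Sum>x\<in>X. shift_factor X x / (real a - real x)) / (z - real a))
      = 1 - (\<Sum>x\<in>insert a X. shift_factor (insert a X) x / (z - real x))"
    using insert.hyps by (simp add: self diff_divide_distrib)
  finally show ?case .
qed

lemma shift_factor_insert_self:
  assumes "finite X" "a \<notin> X"
  shows "shift_factor (insert a X) a = 1 - (\<Sum>x\<in>X. shift_factor X x / (real a - real x))"
  using prod_shift_partial_fractions[OF assms(1), of "real a"] assms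
  by (simp add: shift_factor_insert_eq_prod image_iff)

lemma sum_shift_factor:
  assumes "finite X"
  shows "(\<Sum>x\<in>X. shift_factor X x) = real (card X)"
  using assms
proof (induction X rule: finite_induct)
  case empty
  show ?case by simp
next
  case (insert a X)
  have "shift_factor (insert a X) x - shift_factor X x / (real a - real x) = shift_factor X x"
    if x: "x \<in> X" for x
  proof -
    have "real x \<noteq> real a" using x insert.hyps by auto
    then show ?thesis
      unfolding shift_factor_insert[OF insert.hyps(1,2) x]
      by (simp add: divide_simps) (simp add: algebra_simps)
  qed
  then have "(\<Sum>x\<in>X. shift_factor (insert a X) x) = (\<Sum>x\<in>X. shift_factor X x)
      + (\<Sum>x\<in>X. shift_factor X x / (real a - real x))"
    by (simp add: sum.distrib[symmetric] algebra_simps)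
  then show ?case
    using insert by (simp add: shift_factor_insert_self)
qed

lemma sum_mult_shift_factor:
  assumes "finite X"
  shows "(\<Sum>x\<in>X. real x * shift_factor X x)
       = (\<Sum>x\<in>X. real x) - real (card X) * (real (card X) - 1) / 2"
  using assms
proof (induction X rule: finite_induct)
  case empty
  show ?case by simp
next
  case (insert a X)
  have "real x * shift_factor (insert a X) x - real a * (shift_factor X x / (real a - real x))
      = real x * shift_factor X x - shift_factor X x" if x: "x \<in> X" for x
  proof -
    have "real x \<noteq> real a" using x insert.hyps by auto
    then show ?thesis
      unfolding shift_factor_insert[OF insert.hyps(1,2) x]
      by (simp add: divide_simps) (simp add: algebra_simps)
  qed
  then have "(\<Sum>x\<in>X. real x * shift_factor (insert a X) x)
      = (\<Sum>x\<in>X. real x * shift_factor X x - shift_factor X x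
                 + real a * (shift_factor X x / (real a - real x)))"
    by (intro sum.cong) (auto simp: algebra_simps)
  also have "\<dots> = (\<Sum>x\<in>X. real x * shift_factor X x) - (\<Sum>x\<in>X. shift_factor X x)
      + real a * (\<Sum>x\<in>X. shift_factor X x / (real a - real x))"
    by (simp add: sum.distrib sum_subtractf sum_distrib_left)
  finally show ?case
    using insert by (simp add: shift_factor_insert_self sum_shift_factor field_simps)
qed

lemma shift_factor_eq_0:
  assumes "finite X" "x \<in> X" "1 \<le> x" "x - 1 \<in> X"
  shows "shift_factor X x = 0"
  unfolding shift_factor_def using assms
  by (intro prod_zero bexI[of _ "x - 1"]) (auto simp: of_nat_diff)

definition vandermonde :: "nat set \<Rightarrow> real" where
  "vandermonde X = (\<Prod>x\<in>X. \<Prod>y\<in>{y\<in>X. y < x}. real (x - y))"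

lemma vandermonde_insert:
  assumes "finite Y" "a \<notin> Y"
  shows "vandermonde (insert a Y) = vandermonde Y * (\<Prod>y\<in>Y. \<bar>real a - real y\<bar>)"
proof -
  have below_a: "{y\<in>insert a Y. y < a} = {y\<in>Y. y < a}" by auto
  have below_x: "(\<Prod>y\<in>{y\<in>insert a Y. y < x}. real (x - y))
      = (if a < x then real (x - a) else 1) * (\<Prod>y\<in>{y\<in>Y. y < x}. real (x - y))" for x
  proof (cases "a < x")
    case True
    then have "{y\<in>insert a Y. y < x} = insert a {y\<in>Y. y < x}" by auto
    then show ?thesis using True assms by simp
  next
    case False
    then have "{y\<in>insert a Y. y < x} = {y\<in>Y. y < x}" by auto
    then show ?thesis using False by simp
  qed
  have "vandermonde (insert a Y) = (\<Prod>y\<in>{y\<in>Y. y < a}. real (a - y)) *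
      (\<Prod>x\<in>Y. (if a < x then real (x - a) else 1) * (\<Prod>y\<in>{y\<in>Y. y < x}. real (x - y)))"
    unfolding vandermonde_def prod.insert[OF assms] below_a below_x by simp
  also have "\<dots> = vandermonde Y * (\<Prod>y\<in>Y. (if y < a then real (a - y) else 1)
                                        * (if a < y then real (y - a) else 1))"
    unfolding vandermonde_def prod.distrib prod.inter_filter[OF assms(1)] by (simp add: ac_simps)
  also have "(\<Prod>y\<in>Y. (if y < a then real (a - y) else 1) * (if a < y then real (y - a) else 1))
      = (\<Prod>y\<in>Y. \<bar>real a - real y\<bar>)"
    using assms(2) by (intro prod.cong) (auto simp: of_nat_diff)
  finally show ?thesis .
qed

lemma vandermonde_pos: "finite X \<Longrightarrow> vandermonde X > 0"
  unfolding vandermonde_def by (intro prod_pos) auto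

lemma vandermonde_lessThan: "vandermonde {..<k} = (\<Prod>x<k. fact x)"
proof (induction k)
  case 0
  then show ?case by (simp add: vandermonde_def)
next
  case (Suc k)
  have "(\<Prod>y<k. \<bar>real k - real y\<bar>) = fact k"
    unfolding fact_prod_rev[of k] by (simp add: atLeast0LessThan of_nat_diff)
  then show ?case
    using Suc vandermonde_insert[of "{..<k}" k] by (simp add: lessThan_Suc)
qed

lemma vandermonde_lower:
  assumes X: "finite X" and x: "x \<in> X" "1 \<le> x" "x - 1 \<notin> X"
  shows "vandermonde (insert (x - 1) (X - {x})) * (\<Prod>y\<in>X. fact y)
       = real x * shift_factor X x * vandermonde X * (\<Prod>y\<in>insert (x - 1) (X - {x}). fact y)"
proof -
  let ?Y = "X - {x}"
  have Y: "finite ?Y" "x \<notin> ?Y" "x - 1 \<notin> ?Y" "X = insert x ?Y" using X x by auto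
  have "(\<Prod>y\<in>?Y. \<bar>real (x - 1) - real y\<bar>) = (\<Prod>y\<in>?Y. \<bar>real x - real y\<bar>) * shift_factor X x"
    unfolding shift_factor_def prod.distrib[symmetric]
  proof (rule prod.cong[OF refl])
    fix y assume "y \<in> ?Y"
    then have "y \<noteq> x" "y \<noteq> x - 1" using x by auto
    then show "\<bar>real (x - 1) - real y\<bar> = \<bar>real x - real y\<bar> * ((real x - 1 - real y) / (real x - real y))"
      using x(2) by (cases "y < x") (auto simp: of_nat_diff field_simps)
  qed
  moreover have "(\<Prod>y\<in>X. fact y) = real x * fact (x - 1) * (\<Prod>y\<in>?Y. (fact y :: real))"
    using prod.remove[OF X x(1), of fact] x(2) by (simp add: fact_reduce)
  moreover have "vandermonde X = vandermonde ?Y * (\<Prod>y\<in>?Y. \<bar>real x - real y\<bar>)"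
    using vandermonde_insert[of ?Y x] Y by simp
  ultimately show ?thesis
    using vandermonde_insert[of ?Y "x - 1"] Y by (simp add: ac_simps)
qed

section \<open>The branching rule for standard Young tableaux\<close>

lemma sorted_wrt_ge_nth:
  fixes lam :: "nat list"
  assumes "sorted_wrt (\<ge>) lam" "i \<le> j" "j < length lam"
  shows "lam ! j \<le> lam ! i"
  using assms by (cases "i = j") (auto simp: sorted_wrt_iff_nth_less)

lemma cells_Sigma: "cells lam = (SIGMA i:{..<length lam}. {..<lam ! i})"
  unfolding cells_def by auto

lemma finite_cells: "finite (cells lam)"
  unfolding cells_Sigma by auto

lemma finite_SYT: "finite (SYT lam)"
proof (rule finite_subset)
  show "SYT lam \<subseteq> {T. \<forall>c. (c \<in> cells lam \<longrightarrow> T c \<in> {1..sum_list lam}) \<and> (c \<notin> cells lam \<longrightarrow> T c = 0)}"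
    unfolding SYT_def bij_betw_def by auto
  show "finite {T. \<forall>c. (c \<in> cells lam \<longrightarrow> T c \<in> {1..sum_list lam}) \<and> (c \<notin> cells lam \<longrightarrow> T c = 0)}"
    by (rule finite_set_of_finite_funs) (auto simp: finite_cells)
qed

definition is_corner :: "nat list \<Rightarrow> nat \<Rightarrow> bool" where
  "is_corner lam i \<longleftrightarrow> i < length lam \<and> 0 < lam ! i \<and> (Suc i = length lam \<or> lam ! Suc i < lam ! i)"

definition remove_cell :: "nat list \<Rightarrow> nat \<Rightarrow> nat list" where
  "remove_cell lam i = lam[i := lam ! i - 1]"

lemma length_remove_cell [simp]: "length (remove_cell lam i) = length lam"
  unfolding remove_cell_def by simp

lemma nth_remove_cell:
  "remove_cell lam i ! a = (if a = i \<and> i < length lam then lam ! i - 1 else lam ! a)"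
  unfolding remove_cell_def by (auto simp: list_update_beyond)

lemma cells_remove_cell:
  "is_corner lam i \<Longrightarrow> cells (remove_cell lam i) = cells lam - {(i, lam ! i - 1)}"
  unfolding cells_def is_corner_def by (auto simp: nth_remove_cell split: if_splits)

lemma sum_list_remove_cell:
  "is_corner lam i \<Longrightarrow> sum_list (remove_cell lam i) = sum_list lam - 1"
  unfolding is_corner_def remove_cell_def by (simp add: sum_list_update)

lemma sorted_remove_cell:
  assumes "sorted_wrt (\<ge>) lam" "is_corner lam i"
  shows "sorted_wrt (\<ge>) (remove_cell lam i)"
  unfolding sorted_wrt_iff_nth_less
proof (intro allI impI)
  fix a b assume ab: "a < b" "b < length (remove_cell lam i)"
  then have "lam ! b \<le> lam ! a" "a = i \<Longrightarrow> lam ! b \<le> lam ! Suc i"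
    using sorted_wrt_ge_nth[OF assms(1)] by auto
  then show "remove_cell lam i ! b \<le> remove_cell lam i ! a"
    using assms(2) ab unfolding is_corner_def by (auto simp: nth_remove_cell)
qed

lemma SYT_max_at_corner:
  assumes T: "T \<in> SYT lam" and n: "sum_list lam = n" "1 \<le> n" and sorted: "sorted_wrt (\<ge>) lam"
  obtains i where "is_corner lam i" "T (i, lam ! i - 1) = n"
proof -
  have bij: "bij_betw T (cells lam) {1..n}" using T n unfolding SYT_def by auto
  then have "n \<in> T ` cells lam" using n unfolding bij_betw_def by auto
  then obtain i j where ij: "(i, j) \<in> cells lam" "T (i, j) = n" by auto
  have le_n: "T d \<le> n" if "d \<in> cells lam" for d using bij that unfolding bij_betw_def by auto
  have "(i, j + 1) \<notin> cells lam"
  proof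
    assume "(i, j + 1) \<in> cells lam"
    then have "T (i, j) < T (i, j + 1)" using T unfolding SYT_def by blast
    then show False using le_n[OF \<open>(i, j + 1) \<in> cells lam\<close>] ij(2) by simp
  qed
  moreover have "(i + 1, j) \<notin> cells lam"
  proof
    assume "(i + 1, j) \<in> cells lam"
    then have "T (i, j) < T (i + 1, j)" using T unfolding SYT_def by blast
    then show False using le_n[OF \<open>(i + 1, j) \<in> cells lam\<close>] ij(2) by simp
  qed
  ultimately have "j = lam ! i - 1" "is_corner lam i"
    using ij(1) sorted_wrt_ge_nth[OF sorted, of i "Suc i"] unfolding is_corner_def cells_def by auto
  with ij that show ?thesis by simp
qed

lemma bij_betw_remove_max:
  fixes T :: "'a \<Rightarrow> nat"
  assumes "c \<in> C" "T c = n" "1 \<le> n"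
  shows "bij_betw T C {1..n} \<longleftrightarrow> bij_betw (T(c := 0)) (C - {c}) {1..n - 1}"
proof -
  have "C = (C - {c}) \<union> {c}" "{1..n} = {1..n - 1} \<union> {n}"
    using assms(1,3) by auto
  then have "bij_betw T C {1..n} \<longleftrightarrow> bij_betw T (C - {c}) {1..n - 1}"
    using notIn_Un_bij_betw3[of c "C - {c}" T "{1..n - 1}"] assms(2,3) by auto
  also have "\<dots> \<longleftrightarrow> bij_betw (T(c := 0)) (C - {c}) {1..n - 1}"
    by (rule bij_betw_cong) simp
  finally show ?thesis .
qed

lemma increasing_remove_max:
  fixes s :: "'a \<times> 'b \<Rightarrow> 'a \<times> 'b" and T :: "'a \<times> 'b \<Rightarrow> nat"
  assumes B: "bij_betw T C {1..n}" and c: "c \<in> C" "T c = n"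
    and s: "\<And>a b. s (a, b) \<in> C \<Longrightarrow> (a, b) \<in> C" "\<And>a b. (a, b) = c \<Longrightarrow> s (a, b) \<notin> C"
  shows "(\<forall>a b. s (a, b) \<in> C \<longrightarrow> T (a, b) < T (s (a, b)))
     \<longleftrightarrow> (\<forall>a b. s (a, b) \<in> C - {c} \<longrightarrow> (T(c := 0)) (a, b) < (T(c := 0)) (s (a, b)))"
proof -
  have less_n: "T d < n" if "d \<in> C - {c}" for d
  proof -
    have "T d \<in> {1..n}" "T d \<noteq> T c" using B that c(1) unfolding bij_betw_def inj_on_def by auto
    then show ?thesis using c(2) by auto
  qed
  show ?thesis
  proof (intro iffI allI impI)
    fix a b
    assume ord: "\<forall>a b. s (a, b) \<in> C \<longrightarrow> T (a, b) < T (s (a, b))" and sab: "s (a, b) \<in> C - {c}"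
    have "(a, b) \<noteq> c" using sab s(2) by auto
    then show "(T(c := 0)) (a, b) < (T(c := 0)) (s (a, b))" using ord[rule_format, of a b] sab by simp
  next
    fix a b
    assume ord: "\<forall>a b. s (a, b) \<in> C - {c} \<longrightarrow> (T(c := 0)) (a, b) < (T(c := 0)) (s (a, b))"
      and sab: "s (a, b) \<in> C"
    have ab: "(a, b) \<in> C" "(a, b) \<noteq> c" using s sab by auto
    show "T (a, b) < T (s (a, b))"
    proof (cases "s (a, b) = c")
      case True
      then show ?thesis using less_n ab c(2) by auto
    next
      case False
      then show ?thesis using ord[rule_format, of a b] sab ab by simp
    qed
  qed
qed

lemma SYT_remove_max_iff:
  assumes corner: "is_corner lam i" and n: "sum_list lam = n" and sorted: "sorted_wrt (\<ge>) lam"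
    and Tc: "T (i, lam ! i - 1) = n"
  shows "T \<in> SYT lam \<longleftrightarrow> T((i, lam ! i - 1) := 0) \<in> SYT (remove_cell lam i)"
proof -
  define c where "c = (i, lam ! i - 1)"
  have c: "c \<in> cells lam" "\<And>a b. (a, b) = c \<Longrightarrow> (a, b + 1) \<notin> cells lam"
    "\<And>a b. (a, b) = c \<Longrightarrow> (a + 1, b) \<notin> cells lam"
    using corner unfolding c_def is_corner_def cells_def by auto
  have "1 \<le> n"
    using corner n unfolding is_corner_def by (metis elem_le_sum_list le_trans less_one not_le nth_mem)
  note bij = bij_betw_remove_max[of c "cells lam" T n, OF c(1) Tc[folded c_def] this]
  have zero: "(\<forall>d. d \<notin> cells lam \<longrightarrow> T d = 0) \<longleftrightarrow> (\<forall>d. d \<notin> cells lam - {c} \<longrightarrow> (T(c := 0)) d = 0)"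
    using c(1) by auto
  have row_col: "(a, b + 1) \<in> cells lam \<Longrightarrow> (a, b) \<in> cells lam"
    "(a + 1, b) \<in> cells lam \<Longrightarrow> (a, b) \<in> cells lam" for a b
    using sorted_wrt_ge_nth[OF sorted, of a "a + 1"] unfolding cells_def by auto
  note rows = increasing_remove_max[of T _ _ c "\<lambda>(a, b). (a, b + 1)", unfolded prod.case,
      OF _ c(1) Tc[folded c_def] row_col(1) c(2)]
    and cols = increasing_remove_max[of T _ _ c "\<lambda>(a, b). (a + 1, b)", unfolded prod.case,
      OF _ c(1) Tc[folded c_def] row_col(2) c(3)]
  show ?thesis
    unfolding SYT_def mem_Collect_eq cells_remove_cell[OF corner] sum_list_remove_cell[OF corner]
      n c_def[symmetric]
    by (intro conj_cong bij zero) (simp_all only: bij[symmetric] rows cols)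
qed

lemma card_SYT_max_at_corner:
  assumes corner: "is_corner lam i" and n: "sum_list lam = n" and sorted: "sorted_wrt (\<ge>) lam"
  shows "card {T \<in> SYT lam. T (i, lam ! i - 1) = n} = num_SYT (remove_cell lam i)"
  unfolding num_SYT_def
proof (rule bij_betw_same_card[of "\<lambda>T. T((i, lam ! i - 1) := 0)"],
       rule bij_betw_byWitness[where f' = "\<lambda>S. S((i, lam ! i - 1) := n)"])
  let ?c = "(i, lam ! i - 1)"
  have S0: "S ?c = 0" if "S \<in> SYT (remove_cell lam i)" for S
    using that cells_remove_cell[OF corner] unfolding SYT_def by auto
  show "\<forall>T\<in>{T \<in> SYT lam. T ?c = n}. (T(?c := 0))(?c := n) = T" by auto
  show "\<forall>S\<in>SYT (remove_cell lam i). (S(?c := n))(?c := 0) = S" using S0 by auto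
  show "(\<lambda>T. T(?c := 0)) ` {T \<in> SYT lam. T ?c = n} \<subseteq> SYT (remove_cell lam i)"
    using SYT_remove_max_iff[OF corner n sorted] by auto
  show "(\<lambda>S. S(?c := n)) ` SYT (remove_cell lam i) \<subseteq> {T \<in> SYT lam. T ?c = n}"
  proof
    fix T assume "T \<in> (\<lambda>S. S(?c := n)) ` SYT (remove_cell lam i)"
    then obtain S where S: "S \<in> SYT (remove_cell lam i)" "T = S(?c := n)" by auto
    then have "T(?c := 0) = S" "T ?c = n" using S0 by auto
    then show "T \<in> {T \<in> SYT lam. T ?c = n}" using SYT_remove_max_iff[OF corner n sorted, of T] S(1) by simp
  qed
qed

lemma num_SYT_branching:
  assumes sorted: "sorted_wrt (\<ge>) lam" and n: "sum_list lam = n" "1 \<le> n"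
  shows "num_SYT lam = (\<Sum>i | i < length lam \<and> is_corner lam i. num_SYT (remove_cell lam i))"
proof -
  let ?C = "{i. i < length lam \<and> is_corner lam i}"
  let ?A = "\<lambda>i. {T \<in> SYT lam. T (i, lam ! i - 1) = n}"
  have cover: "SYT lam = (\<Union>i\<in>?C. ?A i)"
  proof
    show "SYT lam \<subseteq> (\<Union>i\<in>?C. ?A i)"
    proof
      fix T assume T: "T \<in> SYT lam"
      then obtain i where "is_corner lam i" "T (i, lam ! i - 1) = n"
        using SYT_max_at_corner[OF T n sorted] by blast
      then show "T \<in> (\<Union>i\<in>?C. ?A i)" using T unfolding is_corner_def by blast
    qed
  qed blast
  have disjoint: "?A i \<inter> ?A j = {}" if "i \<in> ?C" "j \<in> ?C" "i \<noteq> j" for i j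
  proof -
    have "(i, lam ! i - 1) \<in> cells lam" "(j, lam ! j - 1) \<in> cells lam"
      using that unfolding is_corner_def cells_def by auto
    then show ?thesis using that unfolding SYT_def bij_betw_def inj_on_def by auto
  qed
  have "num_SYT lam = card (\<Union>i\<in>?C. ?A i)"
    unfolding num_SYT_def by (subst cover) (rule refl)
  also have "\<dots> = (\<Sum>i\<in>?C. card (?A i))"
    using disjoint by (intro card_UN_disjoint) (auto simp: finite_SYT)
  also have "\<dots> = (\<Sum>i\<in>?C. num_SYT (remove_cell lam i))"
    using card_SYT_max_at_corner[OF _ n(1) sorted] by simp
  finally show ?thesis .
qed

section \<open>The hook length formula\<close>

definition beta :: "nat list \<Rightarrow> nat \<Rightarrow> nat" where
  "beta lam i = lam ! i + length lam - (i + 1)"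

lemma H_eq_image_beta: "H lam = beta lam ` {..<length lam}"
  unfolding H_def beta_def by auto

lemma finite_H: "finite (H lam)"
  unfolding H_eq_image_beta by simp

lemma beta_strict_antimono:
  "sorted_wrt (\<ge>) lam \<Longrightarrow> i < j \<Longrightarrow> j < length lam \<Longrightarrow> beta lam j < beta lam i"
  using sorted_wrt_ge_nth[of lam i j] unfolding beta_def by auto

lemma inj_on_beta: "sorted_wrt (\<ge>) lam \<Longrightarrow> inj_on (beta lam) {..<length lam}"
  by (intro inj_onI) (metis beta_strict_antimono lessThan_iff linorder_neqE_nat less_irrefl)

lemma card_H: "sorted_wrt (\<ge>) lam \<Longrightarrow> card (H lam) = length lam"
  unfolding H_eq_image_beta by (simp add: card_image inj_on_beta)

lemma sum_H:
  assumes sorted: "sorted_wrt (\<ge>) lam"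
  shows "(\<Sum>x\<in>H lam. real x) = real (sum_list lam) + real (length lam) * (real (length lam) - 1) / 2"
proof -
  let ?k = "length lam"
  have "(\<Sum>x\<in>H lam. real x) = (\<Sum>i<?k. real (lam ! i)) + (\<Sum>i<?k. real (?k - Suc i))"
    unfolding H_eq_image_beta sum.reindex[OF inj_on_beta[OF sorted]] sum.distrib[symmetric]
    by (rule sum.cong) (auto simp: beta_def of_nat_diff)
  also have "(\<Sum>i<?k. real (?k - Suc i)) = (\<Sum>i<?k. real i)"
    by (rule sum.nat_diff_reindex)
  also have "(\<Sum>i<k. real i) = real k * (real k - 1) / 2" for k
    by (induction k) (auto simp: field_simps)
  finally show ?thesis
    by (simp add: sum_list_sum_nth atLeast0LessThan)
qed

lemma beta_remove_cell:
  "is_corner lam i \<Longrightarrow> j < length lam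
    \<Longrightarrow> beta (remove_cell lam i) j = (if j = i then beta lam i - 1 else beta lam j)"
  unfolding beta_def is_corner_def by (auto simp: nth_remove_cell)

lemma H_remove_cell:
  assumes sorted: "sorted_wrt (\<ge>) lam" and corner: "is_corner lam i"
  shows "H (remove_cell lam i) = insert (beta lam i - 1) (H lam - {beta lam i})"
proof -
  have i: "i < length lam" using corner unfolding is_corner_def by auto
  have "H (remove_cell lam i) = (\<lambda>j. if j = i then beta lam i - 1 else beta lam j) ` {..<length lam}"
    unfolding H_eq_image_beta using beta_remove_cell[OF corner] by simp
  also have "\<dots> = insert (beta lam i - 1) (beta lam ` ({..<length lam} - {i}))"
    using i by auto
  also have "beta lam ` ({..<length lam} - {i}) = H lam - {beta lam i}"
    unfolding H_eq_image_beta using inj_on_image_set_diff[OF inj_on_beta[OF sorted]] i by auto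
  finally show ?thesis .
qed

lemma beta_corner:
  assumes sorted: "sorted_wrt (\<ge>) lam" and corner: "is_corner lam i"
  shows "1 \<le> beta lam i" "beta lam i - 1 \<notin> H lam"
proof -
  have i: "i < length lam" "0 < lam ! i" using corner unfolding is_corner_def by auto
  then show "1 \<le> beta lam i" unfolding beta_def by auto
  show "beta lam i - 1 \<notin> H lam"
  proof
    assume "beta lam i - 1 \<in> H lam"
    then obtain j where j: "j < length lam" "beta lam j = beta lam i - 1"
      unfolding H_eq_image_beta by auto
    show False
    proof (cases "j \<le> i")
      case True
      then show False
        using j beta_strict_antimono[OF sorted, of j i] i \<open>1 \<le> beta lam i\<close> by (cases "j = i") auto
    next
      case False
      then have "lam ! j \<le> lam ! Suc i" "lam ! Suc i < lam ! i"
        using corner j sorted_wrt_ge_nth[OF sorted, of "Suc i" j] unfolding is_corner_def by auto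
      then show False using j False unfolding beta_def by auto
    qed
  qed
qed

lemma beta_not_corner:
  assumes sorted: "sorted_wrt (\<ge>) lam" and i: "i < length lam" and not_corner: "\<not> is_corner lam i"
  shows "beta lam i = 0 \<or> (1 \<le> beta lam i \<and> beta lam i - 1 \<in> H lam)"
proof (cases "Suc i = length lam")
  case True
  then show ?thesis using not_corner i unfolding is_corner_def beta_def by auto
next
  case False
  then have "Suc i < length lam" "lam ! Suc i = lam ! i"
    using i not_corner sorted_wrt_ge_nth[OF sorted, of i "Suc i"] unfolding is_corner_def by auto
  then have "beta lam (Suc i) = beta lam i - 1" "1 \<le> beta lam i" "Suc i < length lam"
    unfolding beta_def by auto
  then show ?thesis unfolding H_eq_image_beta by (metis imageI lessThan_iff)
qed

lemma shift_factor_beta_not_corner: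
  assumes "sorted_wrt (\<ge>) lam" "i < length lam" "\<not> is_corner lam i"
  shows "real (beta lam i) * shift_factor (H lam) (beta lam i) = 0"
  using beta_not_corner[OF assms] shift_factor_eq_0[OF finite_H, of "beta lam i" lam] assms(2)
  unfolding H_eq_image_beta by auto

lemma num_SYT_zeros: "set lam \<subseteq> {0} \<Longrightarrow> num_SYT lam = 1"
proof -
  assume "set lam \<subseteq> {0}"
  then have "cells lam = {}" "sum_list lam = 0"
    unfolding cells_def using nth_mem[of _ lam] by (fastforce simp: sum_list_eq_0_iff)+
  then have "SYT lam = {\<lambda>_. 0}" unfolding SYT_def by (auto simp: bij_betw_def)
  then show ?thesis unfolding num_SYT_def by simp
qed

lemma H_zeros:
  assumes "set lam \<subseteq> {0}"
  shows "H lam = {..<length lam}"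
proof -
  have "beta lam i = length lam - Suc i" if "i < length lam" for i
    using assms nth_mem[OF that] unfolding beta_def by auto
  then have "H lam = (\<lambda>i. length lam - Suc i) ` {..<length lam}"
    unfolding H_eq_image_beta by simp
  also have "\<dots> = {..<length lam}"
  proof (intro equalityI subsetI)
    fix x assume "x \<in> {..<length lam}"
    then show "x \<in> (\<lambda>i. length lam - Suc i) ` {..<length lam}"
      by (intro image_eqI[of _ _ "length lam - Suc x"]) auto
  qed auto
  finally show ?thesis .
qed

lemma num_SYT_hook_formula:
  assumes "sorted_wrt (\<ge>) lam"
  shows "real (num_SYT lam) * (\<Prod>x\<in>H lam. fact x) = fact (sum_list lam) * vandermonde (H lam)"
  using assms
proof (induction "sum_list lam" arbitrary: lam)
  case 0
  then have "set lam \<subseteq> {0}" by (metis sum_list_eq_0_iff subsetI singleton_iff)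
  then show ?case
    using 0 by (simp add: num_SYT_zeros H_zeros vandermonde_lessThan 0(1)[symmetric])
next
  case (Suc n)
  note sorted = Suc.prems
  let ?H = "H lam"
  let ?C = "{i. i < length lam \<and> is_corner lam i}"
  let ?Q = "fact n * vandermonde ?H / (\<Prod>x\<in>?H. fact x)"
  have "real (num_SYT (remove_cell lam i)) = ?Q * (real (beta lam i) * shift_factor ?H (beta lam i))"
    if corner: "is_corner lam i" for i
  proof -
    let ?H' = "insert (beta lam i - 1) (?H - {beta lam i})"
    have n_rm: "sum_list (remove_cell lam i) = n"
      using Suc.hyps(2) sum_list_remove_cell[OF corner] by simp
    have pos: "(\<Prod>x\<in>A. fact x :: real) > 0" for A by (rule prod_pos) auto
    have "beta lam i \<in> ?H"
      using corner unfolding H_eq_image_beta is_corner_def by auto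
    note lower = vandermonde_lower[OF finite_H this beta_corner[OF sorted corner]]
    have "real (num_SYT (remove_cell lam i)) = fact n * vandermonde ?H' / (\<Prod>x\<in>?H'. fact x)"
      using Suc.hyps(1)[OF n_rm[symmetric] sorted_remove_cell[OF sorted corner]]
        H_remove_cell[OF sorted corner] n_rm pos[of ?H'] by (simp add: field_simps)
    also have "vandermonde ?H' = real (beta lam i) * shift_factor ?H (beta lam i) * vandermonde ?H
        * (\<Prod>x\<in>?H'. fact x) / (\<Prod>x\<in>?H. fact x)"
      using lower pos[of ?H] by (simp add: field_simps)
    finally show ?thesis
      using pos[of ?H'] by (simp add: field_simps)
  qed
  then have "real (num_SYT lam) = ?Q * (\<Sum>i\<in>?C. real (beta lam i) * shift_factor ?H (beta lam i))"
    using num_SYT_branching[OF sorted Suc.hyps(2)[symmetric]] by (simp add: sum_distrib_left)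
  also have "(\<Sum>i\<in>?C. real (beta lam i) * shift_factor ?H (beta lam i))
      = (\<Sum>i<length lam. real (beta lam i) * shift_factor ?H (beta lam i))"
    by (rule sum.mono_neutral_left) (auto simp: shift_factor_beta_not_corner[OF sorted])
  also have "\<dots> = (\<Sum>x\<in>?H. real x * shift_factor ?H x)"
    unfolding H_eq_image_beta by (simp add: sum.reindex inj_on_beta[OF sorted])
  also have "\<dots> = real (Suc n)"
    using sum_mult_shift_factor[OF finite_H, of lam] sum_H[OF sorted] card_H[OF sorted] Suc.hyps(2)
    by simp
  finally show ?case
    using prod_pos[of ?H "fact :: nat \<Rightarrow> real"] by (simp add: field_simps Suc.hyps(2)[symmetric])
qed

lemma num_SYT_pos: "sorted_wrt (\<ge>) lam \<Longrightarrow> num_SYT lam > 0"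
  using num_SYT_hook_formula[of lam] vandermonde_pos[OF finite_H, of lam] by (auto intro: ccontr)

section \<open>The sign function Od\<close>

lemma Od_eq:
  assumes "x = 2 ^ k * u" "odd u"
  shows "Od x = (if u mod 4 = 1 then 1 else -1)"
proof -
  have "multiplicity (2::nat) x = k"
    using assms by (intro multiplicity_decomposeI) auto
  then show ?thesis using assms unfolding Od_def by simp
qed

lemma Od_odd: "odd a \<Longrightarrow> Od a = (if a mod 4 = 1 then 1 else -1)"
  using Od_eq[of a 0 a] by simp

lemma Od_square: "Od a * Od a = 1"
  unfolding Od_def by auto

lemma Od_mult:
  fixes a b :: nat
  assumes "a > 0" "b > 0"
  shows "Od (a * b) = Od a * Od b"
proof -
  obtain u where a: "a = 2 ^ multiplicity 2 a * u" "odd u"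
    using multiplicity_decompose'[of a 2] assms(1) by auto
  obtain v where b: "b = 2 ^ multiplicity 2 b * v" "odd v"
    using multiplicity_decompose'[of b 2] assms(2) by auto
  define k l where "k = multiplicity 2 a" and "l = multiplicity 2 b"
  note a = a[folded k_def] and b = b[folded l_def]
  have "a * b = 2 ^ (k + l) * (u * v)" using a b by (simp add: power_add ac_simps)
  moreover have "u mod 4 = 1 \<or> u mod 4 = 3" "v mod 4 = 1 \<or> v mod 4 = 3"
    using a(2) b(2) by presburger+
  moreover have "(u * v) mod 4 = (u mod 4) * (v mod 4) mod 4" by (simp add: mod_mult_eq)
  ultimately show ?thesis using Od_eq[OF a] Od_eq[OF b] Od_eq[of "a * b" "k + l" "u * v"] a(2) b(2)
    by auto
qed

lemma Od_double: "a > 0 \<Longrightarrow> Od (2 * a) = Od a"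
  using Od_mult[of 2 a] Od_eq[of 2 1 1] by simp

lemma Od_prod:
  "finite A \<Longrightarrow> (\<forall>t\<in>A. f t > 0) \<Longrightarrow> Od (\<Prod>t\<in>A. f t) = (\<Prod>t\<in>A. Od (f t))"
  by (induction A rule: finite_induct) (simp_all add: Od_odd Od_mult prod_pos)

lemma Od_cancel:
  assumes "a * b = c * d" "0 < a" "0 < b" "0 < c" "0 < d"
  shows "Od a = Od c * Od d * Od b"
proof -
  have "Od a * Od b = Od c * Od d" using arg_cong[OF assms(1), of Od] assms(2-) by (simp add: Od_mult)
  then have "Od a * (Od b * Od b) = Od c * Od d * Od b" by (simp add: ac_simps)
  then show ?thesis by (simp add: Od_square)
qed

lemma prod_Od_odd_four: "(\<Prod>t\<in>{t\<in>{M<..M + 4}. odd t}. Od t) = -1"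
proof (cases "even M")
  case True
  then have "{t\<in>{M<..M + 4}. odd t} = {M + 1, M + 3}" by (auto, presburger+)
  moreover have "(M + 1) mod 4 = 1 \<longleftrightarrow> (M + 3) mod 4 \<noteq> 1" using True by presburger
  ultimately show ?thesis using True by (auto simp: Od_odd)
next
  case False
  then have "{t\<in>{M<..M + 4}. odd t} = {M + 2, M + 4}" by (auto, presburger+)
  moreover have "(M + 2) mod 4 = 1 \<longleftrightarrow> (M + 4) mod 4 \<noteq> 1" using False by presburger
  ultimately show ?thesis using False by (auto simp: Od_odd)
qed

lemma prod_Od_odd_split:
  "(\<Prod>t\<in>{t\<in>{M<..M + 2 * L}. odd t}. Od t)
    = (\<Prod>t\<in>{t\<in>{M<..M + L}. odd t}. Od t) * (\<Prod>t\<in>{t\<in>{M + L<..M + L + L}. odd t}. Od t)"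
proof -
  have "{t\<in>{M<..M + 2 * L}. odd t} = {t\<in>{M<..M + L}. odd t} \<union> {t\<in>{M + L<..M + L + L}. odd t}"
    by auto
  moreover have "{t\<in>{M<..M + L}. odd t} \<inter> {t\<in>{M + L<..M + L + L}. odd t} = {}" by auto
  ultimately show ?thesis by (simp add: prod.union_disjoint)
qed

lemma prod_Od_odd_pow2: "3 \<le> R \<Longrightarrow> (\<Prod>t\<in>{t\<in>{M<..M + 2 ^ R}. odd t}. Od t) = 1"
proof (induction R arbitrary: M rule: dec_induct)
  case base
  have "(2::nat) ^ 3 = 2 * 4" by simp
  then show ?case
    using prod_Od_odd_split[of M 4] prod_Od_odd_four[of M] prod_Od_odd_four[of "M + 4"] by simp
next
  case (step R)
  then show ?case using prod_Od_odd_split[of M "2 ^ R"] by simp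
qed

lemma Od_prod_interval_double:
  "Od (\<Prod>{M<..M + 2 * L}) = (\<Prod>t\<in>{t\<in>{M<..M + 2 * L}. odd t}. Od t) * Od (\<Prod>{M div 2<..M div 2 + L})"
proof -
  let ?A = "{M<..M + 2 * L}"
  have evens: "{t\<in>?A. even t} = (\<lambda>s. 2 * s) ` {M div 2<..M div 2 + L}"
    by (auto elim!: evenE intro!: image_eqI)
  have "(\<Prod>t\<in>?A. Od t) = (\<Prod>t\<in>?A \<inter> Collect odd. Od t) * (\<Prod>t\<in>?A - Collect odd. Od t)"
    by (rule prod.Int_Diff) simp
  moreover have "?A \<inter> Collect odd = {t\<in>?A. odd t}" "?A - Collect odd = {t\<in>?A. even t}" by auto
  ultimately have "(\<Prod>t\<in>?A. Od t) = (\<Prod>t\<in>{t\<in>?A. odd t}. Od t) * (\<Prod>t\<in>{t\<in>?A. even t}. Od t)"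
    by simp
  then have "Od (\<Prod>?A) = (\<Prod>t\<in>{t\<in>?A. odd t}. Od t) * (\<Prod>t\<in>{t\<in>?A. even t}. Od t)"
    using Od_prod[of ?A id] by simp
  also have "(\<Prod>t\<in>{t\<in>?A. even t}. Od t) = (\<Prod>s\<in>{M div 2<..M div 2 + L}. Od s)"
    unfolding evens by (subst prod.reindex) (auto simp: inj_on_def Od_double)
  also have "\<dots> = Od (\<Prod>{M div 2<..M div 2 + L})"
    using Od_prod[of "{M div 2<..M div 2 + L}" id] by simp
  finally show ?thesis .
qed

lemma Od_prod_interval_pow2:
  assumes "2 \<le> R" "2 ^ R \<le> N" "N < 2 ^ (R + 1)"
  shows "Od (\<Prod>{N - 2 ^ R<..N}) = (if odd (N div 2 ^ (R - 1)) then 1 else -1)"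
  using assms
proof (induction R arbitrary: N rule: dec_induct)
  case base
  then have "N \<in> {4, 5, 6, 7}" by auto
  moreover have "Od 24 = -1" "Od 120 = -1" "Od 360 = 1" "Od 840 = 1"
    using Od_eq[of 24 3 3] Od_eq[of 120 3 15] Od_eq[of 360 3 45] Od_eq[of 840 3 105] by simp_all
  moreover have "{0<..4::nat} = {1, 2, 3, 4}" "{1<..5::nat} = {2, 3, 4, 5}"
    "{2<..6::nat} = {3, 4, 5, 6}" "{3<..7::nat} = {4, 5, 6, 7}" by auto
  ultimately show ?case by auto
next
  case (step R)
  let ?M = "N - 2 ^ Suc R"
  have N: "N = ?M + 2 * 2 ^ R" "N div 2 = (N div 2 - 2 ^ R) + 2 ^ R" "?M div 2 = N div 2 - 2 ^ R"
    using step.prems by auto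
  have "Od (\<Prod>{?M<..N}) = Od (\<Prod>{N div 2 - 2 ^ R<..N div 2})"
    using Od_prod_interval_double[of ?M "2 ^ R"] prod_Od_odd_pow2[of "Suc R" ?M] step.hyps N
    by simp
  also have "\<dots> = (if odd (N div 2 div 2 ^ (R - 1)) then 1 else -1)"
    using step.prems by (intro step.IH) auto
  also have "N div 2 div 2 ^ (R - 1) = N div 2 ^ (Suc R - 1)"
    using step.hyps by (simp add: div_mult2_eq[symmetric] power_Suc[symmetric] del: power_Suc)
  finally show ?case .
qed

lemma fact_add_eq_fact_mult_prod: "(fact (M + L) :: nat) = fact M * \<Prod>{M<..M + L}"
proof (induction L)
  case (Suc L)
  have "{M<..M + Suc L} = insert (Suc (M + L)) {M<..M + L}" by auto
  then show ?case using Suc by (simp add: ac_simps)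
qed simp

lemma Od_fact_pow2:
  assumes "2 \<le> R" "2 ^ R \<le> N" "N < 2 ^ (R + 1)"
  shows "Od (fact N) * Od (fact (N - 2 ^ R)) = (if odd (N div 2 ^ (R - 1)) then 1 else -1)"
proof -
  have "(fact N :: nat) = fact (N - 2 ^ R) * \<Prod>{N - 2 ^ R<..N}"
    using fact_add_eq_fact_mult_prod[of "N - 2 ^ R" "2 ^ R"] assms(2) by simp
  then have "Od (fact N) = Od (fact (N - 2 ^ R)) * Od (\<Prod>{N - 2 ^ R<..N})"
    by (simp add: Od_mult prod_pos)
  then show ?thesis
    using Od_prod_interval_pow2[OF assms] Od_square[of "fact (N - 2 ^ R)"] by (simp add: ac_simps)
qed

lemma s2_eq:
  assumes "1 \<le> R" "2 ^ R \<le> N" "N < 2 ^ (R + 1)"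
  shows "s2 N = 1 + N div 2 ^ (R - 1) mod 2"
proof -
  have "(GREATEST k. 2 ^ k \<le> N) = R"
  proof (rule Greatest_equality)
    fix k assume "2 ^ k \<le> N"
    then have "2 ^ k < (2::nat) ^ (R + 1)" using assms(3) by linarith
    then show "k \<le> R" using power_less_imp_less_exp[of "2::nat" k "R + 1"] by simp
  qed fact
  moreover have "N div 2 ^ R = 1" using assms by (simp add: div_nat_eqI)
  ultimately show ?thesis unfolding s2_def Let_def by simp
qed

lemma power_s2_eq_Od_fact:
  assumes "2 \<le> R" "2 ^ R \<le> N" "N < 2 ^ (R + 1)"
  shows "(-1::real) ^ s2 N = of_int (Od (fact N) * Od (fact (N - 2 ^ R)))"
proof -
  have "s2 N = 1 + N div 2 ^ (R - 1) mod 2" using s2_eq[of R N] assms by simp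
  then show ?thesis
    unfolding Od_fact_pow2[OF assms] by (cases "odd (N div 2 ^ (R - 1))") (auto simp: odd_iff_mod_2_eq_one)
qed

section \<open>Comparing a shape with its core\<close>

lemma num_SYT_append_zeros: "num_SYT (mu @ replicate r 0) = num_SYT mu"
proof -
  have "cells (mu @ replicate r 0) = cells mu"
    unfolding cells_def by (auto simp: nth_append split: if_splits)
  then show ?thesis unfolding num_SYT_def SYT_def by (simp add: sum_list_replicate)
qed

lemma sorted_append_zeros:
  assumes "is_partition mu"
  shows "sorted_wrt (\<ge>) (mu @ replicate r 0)"
proof -
  have "sorted_wrt (\<ge>) (replicate r (0::nat))" by (induction r) auto
  then show ?thesis using assms unfolding is_partition_def by (auto simp: sorted_wrt_append)
qed

lemma H_append_zeros: "H (mu @ replicate r 0) = shiftset (H mu) r"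
proof -
  let ?nu = "mu @ replicate r 0" and ?k = "length mu"
  have "H ?nu = beta ?nu ` {..<?k} \<union> beta ?nu ` {?k..<?k + r}"
    unfolding H_eq_image_beta by (simp add: ivl_disj_un flip: image_Un)
  also have "beta ?nu ` {..<?k} = (\<lambda>x. x + r) ` H mu"
    unfolding H_eq_image_beta image_image by (rule image_cong) (auto simp: beta_def nth_append)
  also have "beta ?nu ` {?k..<?k + r} = (\<lambda>j. ?k + r - Suc j) ` {?k..<?k + r}"
    by (rule image_cong) (auto simp: beta_def nth_append)
  also have "\<dots> = {0..<r}"
  proof (intro equalityI subsetI)
    fix x assume "x \<in> {0..<r}"
    then show "x \<in> (\<lambda>j. ?k + r - Suc j) ` {?k..<?k + r}"
      by (intro image_eqI[of _ _ "?k + r - Suc x"]) auto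
  qed auto
  finally show ?thesis unfolding shiftset_def .
qed

lemma H_le_sum_list:
  assumes "is_partition lam" "x \<in> H lam"
  shows "x \<le> sum_list lam"
proof -
  obtain i where i: "i < length lam" "x = beta lam i"
    using assms(2) unfolding H_eq_image_beta by auto
  have "x \<le> lam ! i + (\<Sum>j\<in>{..<length lam} - {i}. 1)"
    using i unfolding beta_def by simp
  also have "\<dots> \<le> lam ! i + (\<Sum>j\<in>{..<length lam} - {i}. lam ! j)"
    using assms(1) unfolding is_partition_def
    by (intro add_left_mono sum_mono) (simp add: Suc_leI)
  also have "\<dots> = sum_list lam"
    using i(1) by (simp add: sum.remove[symmetric] sum_list_sum_nth atLeast0LessThan)
  finally show ?thesis .
qed

lemma num_SYT_exchange:
  assumes lam: "sorted_wrt (\<ge>) lam" "H lam = insert a A" "a \<notin> A"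
    and mu: "sorted_wrt (\<ge>) mu" "H mu = insert b A" "b \<notin> A"
  shows "num_SYT lam * (fact a * fact (sum_list mu) * (\<Prod>y\<in>A. nat \<bar>int b - int y\<bar>))
       = num_SYT mu * (fact b * fact (sum_list lam) * (\<Prod>y\<in>A. nat \<bar>int a - int y\<bar>))"
proof -
  have A: "finite A" using finite_H[of lam] lam(2) by simp
  have hook: "real (num_SYT nu) * fact x * (\<Prod>y\<in>A. fact y)
      = fact (sum_list nu) * vandermonde A * real (\<Prod>y\<in>A. nat \<bar>int x - int y\<bar>)"
    if "sorted_wrt (\<ge>) nu" "H nu = insert x A" "x \<notin> A" for nu x
  proof -
    have "real (\<Prod>y\<in>A. nat \<bar>int x - int y\<bar>) = (\<Prod>y\<in>A. \<bar>real x - real y\<bar>)"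
      unfolding of_nat_prod by (intro prod.cong) auto
    then show ?thesis
      using num_SYT_hook_formula[OF that(1)] vandermonde_insert[OF A that(3)] that(2,3) A
      by (simp add: ac_simps)
  qed
  let ?P = "\<Prod>y\<in>A. fact y :: real"
  let ?Da = "real (\<Prod>y\<in>A. nat \<bar>int a - int y\<bar>)" and ?Db = "real (\<Prod>y\<in>A. nat \<bar>int b - int y\<bar>)"
  have "real (num_SYT lam) * (fact a * fact (sum_list mu) * ?Db) * ?P
      = (real (num_SYT lam) * fact a * ?P) * (fact (sum_list mu) * ?Db)"
    by (simp only: ac_simps)
  also have "\<dots> = (real (num_SYT mu) * fact b * ?P) * (fact (sum_list lam) * ?Da)"
    unfolding hook[OF lam] hook[OF mu] by (simp only: ac_simps)
  also have "\<dots> = real (num_SYT mu) * (fact b * fact (sum_list lam) * ?Da) * ?P"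
    by (simp only: ac_simps)
  finally have "real (num_SYT lam * (fact a * fact (sum_list mu) * (\<Prod>y\<in>A. nat \<bar>int b - int y\<bar>)))
      = real (num_SYT mu * (fact b * fact (sum_list lam) * (\<Prod>y\<in>A. nat \<bar>int a - int y\<bar>)))"
    using prod_pos[of A "fact :: nat \<Rightarrow> real"] by simp
  then show ?thesis by (simp only: of_nat_eq_iff)
qed

lemma eta_sign_eq:
  assumes "2 ^ R \<le> h" "h - 2 ^ R \<notin> H lam"
  shows "eta_sign R lam h = of_int (Od (\<Prod>y\<in>H lam - {h}. nat \<bar>int h - int y\<bar>)
                                  * Od (\<Prod>y\<in>H lam - {h}. nat \<bar>int (h - 2 ^ R) - int y\<bar>))"
proof -
  let ?A = "H lam - {h}"
  have Od_values: "Od b = 1 \<or> Od b = -1" for b unfolding Od_def by auto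
  have "Od a / Od b = of_int (Od a * Od b)" for a b :: nat
    using Od_values[of b] by auto
  then have "eta_sign R lam h = (\<Prod>y\<in>?A. of_int (Od (nat \<bar>int h - int y\<bar>) * Od (nat \<bar>int (h - 2 ^ R) - int y\<bar>)))"
    unfolding eta_sign_def using assms(1) by (intro prod.cong) (simp_all add: of_nat_diff)
  also have "\<dots> = of_int ((\<Prod>y\<in>?A. Od (nat \<bar>int h - int y\<bar>)) * (\<Prod>y\<in>?A. Od (nat \<bar>int (h - 2 ^ R) - int y\<bar>)))"
    by (simp add: prod.distrib)
  also have "\<dots> = of_int (Od (\<Prod>y\<in>?A. nat \<bar>int h - int y\<bar>) * Od (\<Prod>y\<in>?A. nat \<bar>int (h - 2 ^ R) - int y\<bar>))"
    using assms(2) finite_H[of lam] by (subst (1 2) Od_prod) auto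
  finally show ?thesis .
qed

lemma Od_num_SYT_exchange:
  assumes lam: "sorted_wrt (\<ge>) lam" "H lam = insert a A" "a \<notin> A"
    and mu: "sorted_wrt (\<ge>) mu" "H mu = insert b A" "b \<notin> A"
  shows "Od (num_SYT lam) = Od (num_SYT mu) * (Od (fact a) * Od (fact b))
           * (Od (fact (sum_list lam)) * Od (fact (sum_list mu)))
           * (Od (\<Prod>y\<in>A. nat \<bar>int a - int y\<bar>) * Od (\<Prod>y\<in>A. nat \<bar>int b - int y\<bar>))"
proof -
  have A: "finite A" using finite_H[of lam] lam(2) by simp
  have pos: "0 < (\<Prod>y\<in>A. nat \<bar>int a - int y\<bar>)" "0 < (\<Prod>y\<in>A. nat \<bar>int b - int y\<bar>)"
    using lam(3) mu(3) A by (auto intro!: prod_pos)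
  show ?thesis
    using Od_cancel[OF num_SYT_exchange[OF lam mu]] num_SYT_pos[OF lam(1)] num_SYT_pos[OF mu(1)] pos
    by (simp add: Od_mult ac_simps)
qed

theorem proposition3p3:
  fixes R m :: nat and lam mu :: "nat list" and h :: nat
  assumes "m < 2 ^ R"
    and "2 ^ R + m > 3"
    and "partition_of mu m"
    and "is_parent R lam mu"
    and "affected_hook R lam mu h"
  shows "real_of_int (Od (num_SYT lam))
       = (-1) ^ (s2 (2 ^ R + m) + s2 h) * eta_sign R lam h * real_of_int (Od (num_SYT mu))"
proof -
  let ?n = "2 ^ R + m" and ?h' = "h - 2 ^ R" and ?A = "H lam - {h}"
  have mu: "is_partition mu" "sum_list mu = m" and lam: "is_partition lam" "sum_list lam = ?n"
    using assms(3,4) unfolding is_parent_def partition_of_def by auto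
  obtain r where r: "(H lam \<union> {?h'}) - {h} = shiftset (H mu) r" and h: "h \<in> H lam" "2 ^ R \<le> h" "?h' \<notin> H lam"
    using assms(5) unfolding affected_hook_def by blast
  have R: "2 \<le> R"
    using assms(1,2) by (cases "2 \<le> R") (auto simp: not_le less_Suc_eq numeral_2_eq_2)
  have ranges: "2 ^ R \<le> ?n" "?n < 2 ^ (R + 1)" "h < 2 ^ (R + 1)"
    using assms(1) H_le_sum_list[OF lam(1) h(1)] lam(2) by auto
  have "?h' \<noteq> h" using h(2) zero_less_power[of "2::nat" R] by linarith
  then have "H (mu @ replicate r 0) = insert ?h' ?A"
    unfolding H_append_zeros r[symmetric] by auto
  moreover have "H lam = insert h ?A" using h(1) by blast
  moreover have "sorted_wrt (\<ge>) lam" using lam(1) unfolding is_partition_def by blast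
  ultimately have "Od (num_SYT lam) = Od (num_SYT mu) * (Od (fact h) * Od (fact ?h'))
      * (Od (fact ?n) * Od (fact m))
      * (Od (\<Prod>y\<in>?A. nat \<bar>int h - int y\<bar>) * Od (\<Prod>y\<in>?A. nat \<bar>int ?h' - int y\<bar>))"
    using Od_num_SYT_exchange[of lam h ?A "mu @ replicate r 0" ?h'] h(3) sorted_append_zeros[OF mu(1)]
    unfolding num_SYT_append_zeros sum_list_append sum_list_replicate mu(2) lam(2) by simp
  then show ?thesis
    using power_s2_eq_Od_fact[OF R ranges(1,2)] power_s2_eq_Od_fact[OF R h(2) ranges(3)]
      eta_sign_eq[OF h(2,3)] by (simp add: ac_simps power_add)
qed

end
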